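(* Let $G$ be a group generated by $x_1,\dots,x_n$, with finite commutator subgroup $C=[G,G]$, such that $G/C$ is free abelian of rank $n$ with basis the images of $x_1,\dots,x_n$. Let $P=X\cap\mathcal C_G(C)$ with $X=\{g_{\mathbf m}\in T: c_{\,x_1^{m_1}\cdots x_{k-1}^{m_{k-1}},\,x_k}=e \text{ for all } k\}$, and $Q=P\cap Z$ with $Z$ the center of $G$. Then $l_{\mathbf r,q}=e$ for every $\mathbf r\in\mathbb Z^n$ and every $q\in Q$.
   Context: Notation: $\bar g=g^{-1}$, $c_{gh}=\bar g\,\bar h\,g\,h$; $\mathcal C_G(C)$ is the centralizer of $C$ in $G$. For $\mathbf r\in\mathbb Z^n$, $g_{\mathbf r}=x_1^{r_1}\cdots x_n^{r_n}$, $T=\{g_{\mathbf r}\}$. Every $g\in G$ decomposes uniquely as $g=g_{\mathbf r}c$ with $c\in C$; write $\mathbf r_g=\mathbf r$. The link is $l_{\mathbf r,\lambda}=\overline{g_{\mathbf r+\mathbf r_\lambda}}\,\lambda\,g_{\mathbf r}\in C$. *)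

theory Defs
  imports "HOL-Algebra.Algebra"
begin

text \<open>Ordered product x_0^(r 0) * ... * x_(m-1)^(r (m-1)) (0-based indices).\<close>
primrec gprod :: "('a, 'b) monoid_scheme \<Rightarrow> (nat \<Rightarrow> 'a) \<Rightarrow> (nat \<Rightarrow> int) \<Rightarrow> nat \<Rightarrow> 'a" where
  "gprod G x r 0 = \<one>\<^bsub>G\<^esub>"
| "gprod G x r (Suc m) = gprod G x r m \<otimes>\<^bsub>G\<^esub> (x m [^]\<^bsub>G\<^esub> r m)"

definition comm :: "('a, 'b) monoid_scheme \<Rightarrow> 'a \<Rightarrow> 'a \<Rightarrow> 'a" where
  "comm G g h = inv\<^bsub>G\<^esub> g \<otimes>\<^bsub>G\<^esub> inv\<^bsub>G\<^esub> h \<otimes>\<^bsub>G\<^esub> g \<otimes>\<^bsub>G\<^esub> h"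

definition centralizer :: "('a, 'b) monoid_scheme \<Rightarrow> 'a set \<Rightarrow> 'a set" where
  "centralizer G S = {g \<in> carrier G. \<forall>s\<in>S. g \<otimes>\<^bsub>G\<^esub> s = s \<otimes>\<^bsub>G\<^esub> g}"

definition center :: "('a, 'b) monoid_scheme \<Rightarrow> 'a set" where
  "center G = centralizer G (carrier G)"

text \<open>Exponent vectors in Z^n: functions nat => int vanishing from index n on.\<close>
definition expvecs :: "nat \<Rightarrow> (nat \<Rightarrow> int) set" where
  "expvecs n = {r. \<forall>i\<ge>n. r i = 0}"

definition rvec :: "('a, 'b) monoid_scheme \<Rightarrow> (nat \<Rightarrow> 'a) \<Rightarrow> nat \<Rightarrow> 'a \<Rightarrow> (nat \<Rightarrow> int)" where
  "rvec G x n g = (THE r. r \<in> expvecs n \<and>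
      inv\<^bsub>G\<^esub> (gprod G x r n) \<otimes>\<^bsub>G\<^esub> g \<in> derived G (carrier G))"

definition Xset :: "('a, 'b) monoid_scheme \<Rightarrow> (nat \<Rightarrow> 'a) \<Rightarrow> nat \<Rightarrow> 'a set" where
  "Xset G x n = {gprod G x m n | m. m \<in> expvecs n \<and>
      (\<forall>k<n. comm G (gprod G x m k) (x k) = \<one>\<^bsub>G\<^esub>)}"

definition link :: "('a, 'b) monoid_scheme \<Rightarrow> (nat \<Rightarrow> 'a) \<Rightarrow> nat \<Rightarrow> (nat \<Rightarrow> int) \<Rightarrow> 'a \<Rightarrow> 'a" where
  "link G x n r l = inv\<^bsub>G\<^esub> (gprod G x (\<lambda>i. r i + rvec G x n l i) n) \<otimes>\<^bsub>G\<^esub> l \<otimes>\<^bsub>G\<^esub> gprod G x r n"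

end

theory Submission
  imports Defs
begin

text \<open>
  Write \<open>q = g_m\<close> with \<open>q \<in> X\<close>: then each \<open>x_k\<close> commutes with the partial product
  \<open>x_1^m_1 ... x_(k-1)^m_(k-1)\<close>, which is exactly what is needed to merge
  \<open>g_r g_m = g_(r+m)\<close> factor by factor.  Since the \<open>x_i\<close> are independent modulo
  \<open>C\<close>, the decomposition \<open>q = g_m e\<close> gives \<open>r_q = m\<close>, and as \<open>q\<close> is central,
  \<open>l_(r,q) = g_(r+m)^-1 q g_r = g_(r+m)^-1 g_r g_m = e\<close>.
\<close>

lemma (in group) comm_eq_one_iff:
  assumes "a \<in> carrier G" "b \<in> carrier G"
  shows "comm G a b = \<one> \<longleftrightarrow> a \<otimes> b = b \<otimes> a"
proof -
  have "comm G a b = inv (b \<otimes> a) \<otimes> (a \<otimes> b)"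
    using assms by (simp add: comm_def inv_mult_group m_assoc)
  then show ?thesis
    using assms by (metis inv_closed inv_equality inv_inv m_closed r_inv)
qed

lemma (in group) int_pow_commutes:
  assumes "x \<otimes> y = y \<otimes> x" "x \<in> carrier G" "y \<in> carrier G"
  shows "x [^] (i::int) \<otimes> y = y \<otimes> x [^] i"
proof (cases i rule: int_cases)
  case (nonneg n)
  then show ?thesis using group_commutes_pow[OF assms] by (simp add: int_pow_int)
next
  case (neg n)
  let ?a = "x [^] Suc n"
  have a: "?a \<in> carrier G" "?a \<otimes> y = y \<otimes> ?a"
    using assms(2) group_commutes_pow[OF assms] by blast+
  have "inv ?a \<otimes> y = inv ?a \<otimes> (y \<otimes> ?a) \<otimes> inv ?a"
    using a assms(3) by (simp add: m_assoc)
  also have "\<dots> = y \<otimes> inv ?a"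
    using a assms(3) by (metis inv_closed l_inv l_one m_assoc)
  finally show ?thesis
    unfolding neg int_pow_neg_int[OF assms(2)] .
qed

lemma (in group) gprod_closed:
  "\<forall>i<k. x i \<in> carrier G \<Longrightarrow> gprod G x r k \<in> carrier G"
  by (induct k) auto

lemma (in group) gprod_add:
  assumes "\<forall>i<k. x i \<in> carrier G"
    and "\<forall>j<k. gprod G x m j \<otimes> x j = x j \<otimes> gprod G x m j"
  shows "gprod G x r k \<otimes> gprod G x m k = gprod G x (\<lambda>i. r i + m i) k"
  using assms
proof (induct k)
  case (Suc k)
  have cl: "gprod G x c k \<in> carrier G" for c
    using gprod_closed Suc.prems(1) by simp
  have xk: "x k \<in> carrier G" using Suc.prems(1) by simp
  have swap: "x k [^] r k \<otimes> gprod G x m k = gprod G x m k \<otimes> x k [^] r k"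
    using int_pow_commutes[OF _ xk cl] Suc.prems(2) by simp
  have "gprod G x r (Suc k) \<otimes> gprod G x m (Suc k)
      = gprod G x r k \<otimes> (x k [^] r k \<otimes> gprod G x m k) \<otimes> x k [^] m k"
    using cl xk by (simp add: m_assoc)
  also have "\<dots> = (gprod G x r k \<otimes> gprod G x m k) \<otimes> (x k [^] r k \<otimes> x k [^] m k)"
    using cl xk by (simp add: swap m_assoc)
  also have "\<dots> = gprod G x (\<lambda>i. r i + m i) (Suc k)"
    using Suc xk by (simp add: int_pow_mult)
  finally show ?case .
qed simp

lemma (in comm_group) gprod_diff:
  assumes "\<forall>i<k. x i \<in> carrier G"
  shows "gprod G x (\<lambda>i. m i - r i) k = inv (gprod G x r k) \<otimes> gprod G x m k"
proof -
  have cl: "gprod G x c j \<in> carrier G" if "j \<le> k" for c j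
    using gprod_closed assms that by simp
  have "gprod G x r k \<otimes> gprod G x (\<lambda>i. m i - r i) k = gprod G x (\<lambda>i. r i + (m i - r i)) k"
    using assms cl by (intro gprod_add) (auto intro: m_comm)
  then show ?thesis
    using cl by (simp add: inv_solve_left)
qed

lemma (in group_hom) hom_gprod:
  "\<forall>i<k. x i \<in> carrier G \<Longrightarrow> h (gprod G x r k) = gprod H (\<lambda>i. h (x i)) r k"
  by (induct k) (simp_all add: G.gprod_closed hom_int_pow)

lemma (in group) gprod_derived_unique:
  assumes x: "\<forall>i<n. x i \<in> carrier G"
    and indep: "\<forall>r \<in> expvecs n. gprod G x r n \<in> derived G (carrier G) \<longrightarrow> (\<forall>i<n. r i = 0)"
    and r: "r \<in> expvecs n" and m: "m \<in> expvecs n"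
    and rm: "inv (gprod G x r n) \<otimes> gprod G x m n \<in> derived G (carrier G)"
  shows "r = m"
proof -
  define C where "C = derived G (carrier G)"
  have "C \<lhd> G" unfolding C_def by (rule derived_self_is_normal)
  then have C: "subgroup C G" by (rule normal_imp_subgroup)
  interpret Q: comm_group "G Mod C"
    unfolding C_def by (rule derived_quot_is_comm_group)
  interpret h: group_hom G "G Mod C" "\<lambda>a. C #> a"
    using \<open>C \<lhd> G\<close> by (simp add: group_hom_def group_hom_axioms_def is_group
        Q.is_group normal.r_coset_hom_Mod)
  let ?y = "\<lambda>i. C #> x i"
  have y: "\<forall>i<n. ?y i \<in> carrier (G Mod C)" using x by simp
  have cl: "gprod G x c n \<in> carrier G" for c using gprod_closed x by simp
  have "C #> gprod G x (\<lambda>i. m i - r i) n = gprod (G Mod C) ?y (\<lambda>i. m i - r i) n"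
    using h.hom_gprod x by simp
  also have "\<dots> = C #> (inv (gprod G x r n) \<otimes> gprod G x m n)"
    using Q.gprod_diff[OF y] h.hom_gprod[OF x] cl by simp
  also have "\<dots> = C"
    using coset_join2 cl rm C by (simp add: C_def)
  finally have "gprod G x (\<lambda>i. m i - r i) n \<in> C"
    using coset_join1 cl C by blast
  moreover have "(\<lambda>i. m i - r i) \<in> expvecs n"
    using r m by (simp add: expvecs_def)
  ultimately have "\<forall>i<n. m i - r i = 0"
    using indep unfolding C_def by blast
  then have "m i = r i" for i
    using r m by (cases "i < n") (simp_all add: expvecs_def)
  then show "r = m" by auto
qed

lemma (in group) rvec_gprod:
  assumes "\<forall>i<n. x i \<in> carrier G"
    and "\<forall>r \<in> expvecs n. gprod G x r n \<in> derived G (carrier G) \<longrightarrow> (\<forall>i<n. r i = 0)"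
    and "m \<in> expvecs n"
  shows "rvec G x n (gprod G x m n) = m"
  unfolding rvec_def
proof (rule the_equality)
  show "m \<in> expvecs n \<and> inv (gprod G x m n) \<otimes> gprod G x m n \<in> derived G (carrier G)"
    using assms gprod_closed subgroup.one_closed[OF derived_is_subgroup] by simp
qed (use assms gprod_derived_unique in blast)

lemma (in group) link_central_gprod:
  assumes x: "\<forall>i<n. x i \<in> carrier G"
    and indep: "\<forall>r \<in> expvecs n. gprod G x r n \<in> derived G (carrier G) \<longrightarrow> (\<forall>i<n. r i = 0)"
    and m: "m \<in> expvecs n"
    and X: "\<forall>k<n. gprod G x m k \<otimes> x k = x k \<otimes> gprod G x m k"
    and central: "gprod G x m n \<in> center G"
  shows "link G x n r (gprod G x m n) = \<one>"
proof -
  have cl: "gprod G x c n \<in> carrier G" for c using gprod_closed x by simp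
  have "gprod G x m n \<otimes> gprod G x r n = gprod G x r n \<otimes> gprod G x m n"
    using central cl by (simp add: center_def centralizer_def)
  then have "link G x n r (gprod G x m n)
      = inv (gprod G x (\<lambda>i. r i + m i) n) \<otimes> (gprod G x r n \<otimes> gprod G x m n)"
    unfolding link_def rvec_gprod[OF x indep m] using cl by (simp add: m_assoc)
  also have "\<dots> = \<one>"
    using gprod_add[OF x X] cl by simp
  finally show ?thesis .
qed

theorem corollary6p2:
  fixes G (structure) and x :: "nat \<Rightarrow> 'a" and n :: nat
  assumes "group G"
    and "\<forall>i<n. x i \<in> carrier G"
    and "generate G (x ` {..<n}) = carrier G"
    and "finite (derived G (carrier G))"
    and "\<forall>r \<in> expvecs n. gprod G x r n \<in> derived G (carrier G) \<longrightarrow> (\<forall>i<n. r i = 0)"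
  shows "\<forall>r \<in> expvecs n. \<forall>q \<in> Xset G x n \<inter> centralizer G (derived G (carrier G)) \<inter> center G.
           link G x n r q = \<one>"
proof (intro ballI)
  interpret group G by fact
  fix r q
  assume q: "q \<in> Xset G x n \<inter> centralizer G (derived G (carrier G)) \<inter> center G"
  then obtain m where m: "m \<in> expvecs n" "q = gprod G x m n"
    and X: "\<forall>k<n. comm G (gprod G x m k) (x k) = \<one>"
    unfolding Xset_def by blast
  have "\<forall>k<n. gprod G x m k \<otimes> x k = x k \<otimes> gprod G x m k"
    using X assms(2) comm_eq_one_iff gprod_closed by simp
  then show "link G x n r q = \<one>"
    using link_central_gprod[OF assms(2,5) m(1)] q m(2) by blast
qed

end
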